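(* Let $n\ge3$ and consider the cycle graph $C_n$. For $i\in[n]$ let $\mathrm{Inc}_i^n:=i(i+1)\cdots n\,12\cdots(i-1)$. (1) If $i\ge4$, then for every $j\in[n]$: $B(j,\mathrm{Inc}_i^n,C_n)=i(i+1)\cdots j$ if $j\ge i$; $=n\,12\cdots j$ if $3\le j\le i-1$; $=12$ if $j=2$; $=1$ if $j=1$. Consequently the number of $C_n$-friendship parking functions with outcome $\mathrm{Inc}_i^n$ is $(n-i+1)!\,i!/3$. (2) If $i\le3$, then for every $j\in[n]$: $B(j,\mathrm{Inc}_i^n,C_n)=i\cdots j$ if $j\ge i$, and $=1\cdots j$ if $j\le i-1$. Consequently the number of $C_n$-friendship parking functions with outcome $\mathrm{Inc}_i^n$ is $(n+1-i)!\,(i-1)!$.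
   Context: $C_n$ ($n\ge3$) is the cycle graph with vertex set $[n]$ and edges $\{i,i+1\}$ for $i\in[n-1]$ and $\{n,1\}$. Permutations are in one-line notation. Friendship parking process for a graph $G$ on $[n]$ and a parking preference $p\in[n]^n$: cars $1,\dots,n$ enter in order into spots $1,\dots,n$ (initially empty); spot $k$ is available for car $i$ if it is unoccupied when $i$ enters and each of spots $k-1,k+1$ is unoccupied or occupied by a car adjacent to $i$ in $G$ (spots $0,n+1$ count as unoccupied); car $i$ parks in the first available spot $k\ge p_i$, failing otherwise. $p$ is a $G$-friendship parking function if all cars park; its outcome is the permutation $\pi$ with $\pi_k$ the car in spot $k$ at the end. Blockers: for a permutation $\pi$ that is a Hamiltonian path of $G$ (i.e. $\{\pi_k,\pi_{k+1}\}$ is an edge for all $k$) and $i\in[n]$, $j=\pi_k$ is a blocker for $i$ if (1) $j\le i$, or (2) $j>i$ and some $\ell\in\{\pi_{k-1},\pi_{k+1}\}$ satisfies $\ell<i$ and $\ell$ not adjacent to $i$ in $G$. The blocking sequence $B(i,\pi,G)$ is the longest contiguous block of $\pi$ ending at $i$ consisting of blockers for $i$. *)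

theory Defs
  imports Complex_Main
begin

definition cyc :: "nat \<Rightarrow> nat \<Rightarrow> nat \<Rightarrow> bool" where
  "cyc n a b \<longleftrightarrow> a \<in> {1..n} \<and> b \<in> {1..n} \<and>
     (b = a + 1 \<or> a = b + 1 \<or> (a = n \<and> b = 1) \<or> (a = 1 \<and> b = n))"

text \<open>A parking configuration: occ k is the car in spot k, 0 meaning unoccupied
  (cars are 1..n; spots 0 and n+1 are never occupied).\<close>
definition available :: "(nat \<Rightarrow> nat \<Rightarrow> bool) \<Rightarrow> nat \<Rightarrow> (nat \<Rightarrow> nat) \<Rightarrow> nat \<Rightarrow> nat \<Rightarrow> bool" where
  "available G n occ i k \<longleftrightarrow> k \<in> {1..n} \<and> occ k = 0 \<and>
     (occ (k - 1) = 0 \<or> G i (occ (k - 1))) \<and>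
     (occ (k + 1) = 0 \<or> G i (occ (k + 1)))"

text \<open>Run the friendship parking process for the first m cars; the preference
  of car c is p ! (c - 1). None means some car failed to park.\<close>
fun park :: "(nat \<Rightarrow> nat \<Rightarrow> bool) \<Rightarrow> nat \<Rightarrow> nat list \<Rightarrow> nat \<Rightarrow> (nat \<Rightarrow> nat) option" where
  "park G n p 0 = Some (\<lambda>_. 0)"
| "park G n p (Suc m) =
     (case park G n p m of
        None \<Rightarrow> None
      | Some occ \<Rightarrow>
          (if \<exists>k. p ! m \<le> k \<and> available G n occ (Suc m) k
           then Some (occ((LEAST k. p ! m \<le> k \<and> available G n occ (Suc m) k) := Suc m))
           else None))"

definition is_friendship_pf :: "(nat \<Rightarrow> nat \<Rightarrow> bool) \<Rightarrow> nat \<Rightarrow> nat list \<Rightarrow> bool" where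
  "is_friendship_pf G n p \<longleftrightarrow> length p = n \<and> set p \<subseteq> {1..n} \<and> park G n p n \<noteq> None"

definition outcome :: "(nat \<Rightarrow> nat \<Rightarrow> bool) \<Rightarrow> nat \<Rightarrow> nat list \<Rightarrow> nat list" where
  "outcome G n p = map (the (park G n p n)) [1..<n+1]"

definition is_blocker :: "(nat \<Rightarrow> nat \<Rightarrow> bool) \<Rightarrow> nat list \<Rightarrow> nat \<Rightarrow> nat \<Rightarrow> bool" where
  "is_blocker G \<pi> i k \<longleftrightarrow> k < length \<pi> \<and>
     (\<pi> ! k \<le> i \<or>
      (\<pi> ! k > i \<and>
       ((0 < k \<and> \<pi> ! (k - 1) < i \<and> \<not> G i (\<pi> ! (k - 1))) \<or>
        (k + 1 < length \<pi> \<and> \<pi> ! (k + 1) < i \<and> \<not> G i (\<pi> ! (k + 1))))))"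

text \<open>Blocking sequence: the longest contiguous block of pi ending at i
  consisting of blockers for i.\<close>
definition blocking_seq :: "nat \<Rightarrow> nat list \<Rightarrow> (nat \<Rightarrow> nat \<Rightarrow> bool) \<Rightarrow> nat list" where
  "blocking_seq i \<pi> G =
     (let q = the_elem {k. k < length \<pi> \<and> \<pi> ! k = i};
          m = (LEAST m. \<forall>k. m \<le> k \<and> k \<le> q \<longrightarrow> is_blocker G \<pi> i k)
      in drop m (take (q + 1) \<pi>))"

definition Inc :: "nat \<Rightarrow> nat \<Rightarrow> nat list" where
  "Inc n i = [i..<n+1] @ [1..<i]"

end

theory Submission
  imports Defs
begin

text \<open>
  Cars park one at a time, so a preference list yields the outcome \<pi> exactly when every car c,
  arriving while cars 1, ..., c-1 already stand in their final spots, finds its final spot as the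
  first available spot at or after its preference; the number of parking functions with outcome
  \<pi> is the product over the cars of the number of such preferences. For Inc_i^n on C_n a car
  c \<ge> i finds the spots 1, ..., c-i filled, so all c+1-i preferences up to its spot work. A car
  c < i joins the block to the right of spot n+1-i; that spot is still empty, and it is blocked for
  c exactly when c \<ge> 3, because its right neighbour is car 1. So c has c admissible preferences
  if c \<le> 2 and c+1 if c \<ge> 3, and the count is (n+1-i)! times 1\<cdot>2\<cdot>4\<cdot>5\<cdots>i.
\<close>

lemma park_SucE:
  assumes "park G n p (Suc m) = Some Y"
  obtains X k where "park G n p m = Some X" "available G n X (Suc m) k" "Y = X(k := Suc m)"
proof -
  obtain X where X: "park G n p m = Some X"
    using assms by (cases "park G n p m") auto
  have ex: "\<exists>k. p ! m \<le> k \<and> available G n X (Suc m) k"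
    using assms X by (auto split: if_splits)
  show thesis
  proof
    show "available G n X (Suc m) (LEAST k. p ! m \<le> k \<and> available G n X (Suc m) k)"
      using LeastI_ex[OF ex] by blast
  qed (use assms X ex in auto)
qed

lemma park_Some_range:
  "park G n p m = Some X \<Longrightarrow> X k \<le> m \<and> (X k \<noteq> 0 \<longrightarrow> k \<in> {1..n})"
proof (induction m arbitrary: X)
  case (Suc m)
  then show ?case by (elim park_SucE) (fastforce simp: available_def dest: Suc.IH)
qed simp

definition restrict_cars :: "(nat \<Rightarrow> nat) \<Rightarrow> nat \<Rightarrow> nat \<Rightarrow> nat" where
  "restrict_cars Z m = (\<lambda>k. if Z k \<le> m then Z k else 0)"

lemma park_prefix:
  assumes "park G n p m' = Some Z" "m \<le> m'"
  shows "park G n p m = Some (restrict_cars Z m)"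
  using assms
proof (induction m' arbitrary: Z)
  case 0
  then show ?case by (auto simp: restrict_cars_def)
next
  case (Suc m')
  show ?case
  proof (cases "m = Suc m'")
    case True
    then show ?thesis
      using Suc.prems(1) park_Some_range[OF Suc.prems(1)] by (auto simp: restrict_cars_def)
  next
    case False
    from Suc.prems(1) obtain X k where
      X: "park G n p m' = Some X" "available G n X (Suc m') k" "Z = X(k := Suc m')"
      by (rule park_SucE)
    have "restrict_cars Z m = restrict_cars X m"
      using X False Suc.prems(2) by (auto simp: restrict_cars_def available_def)
    then show ?thesis using Suc.IH[OF X(1)] False Suc.prems(2) by simp
  qed
qed

definition parks_at ::
    "(nat \<Rightarrow> nat \<Rightarrow> bool) \<Rightarrow> nat \<Rightarrow> (nat \<Rightarrow> nat) \<Rightarrow> nat \<Rightarrow> nat \<Rightarrow> nat \<Rightarrow> bool" where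
  "parks_at G n occ c q s \<longleftrightarrow>
     q \<le> s \<and> available G n occ c s \<and> (\<forall>k. q \<le> k \<and> k < s \<longrightarrow> \<not> available G n occ c k)"

lemma parks_at_Least:
  "parks_at G n occ c q s \<longleftrightarrow>
     (\<exists>k. q \<le> k \<and> available G n occ c k) \<and> (LEAST k. q \<le> k \<and> available G n occ c k) = s"
proof
  assume "parks_at G n occ c q s"
  then show "(\<exists>k. q \<le> k \<and> available G n occ c k) \<and> (LEAST k. q \<le> k \<and> available G n occ c k) = s"
    unfolding parks_at_def by (metis (no_types, lifting) Least_equality not_le)
next
  assume "(\<exists>k. q \<le> k \<and> available G n occ c k) \<and> (LEAST k. q \<le> k \<and> available G n occ c k) = s"
  then show "parks_at G n occ c q s"
    unfolding parks_at_def by (metis (mono_tags, lifting) LeastI_ex not_less_Least)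
qed

lemma park_Suc_eq_upd_iff:
  assumes "park G n p m = Some occ"
  shows "park G n p (Suc m) = Some (occ(s := Suc m)) \<longleftrightarrow> parks_at G n occ (Suc m) (p ! m) s"
proof -
  have fresh: "occ k \<noteq> Suc m" for k
    using park_Some_range[OF assms] by (metis Suc_n_not_le_n)
  have "occ(k := Suc m) = occ(s := Suc m) \<longleftrightarrow> k = s" for k
    using fresh by (metis fun_upd_apply)
  then show ?thesis
    using assms by (auto simp: parks_at_Least)
qed

lemma park_eq_Some_iff:
  assumes spot: "\<And>c k. c \<in> {1..n} \<Longrightarrow> Z k = c \<longleftrightarrow> k = spot c"
    and bound: "\<And>k. Z k \<le> n"
  shows "park G n p n = Some Z \<longleftrightarrow>
    (\<forall>m<n. parks_at G n (restrict_cars Z m) (Suc m) (p ! m) (spot (Suc m)))"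
proof -
  have upd: "restrict_cars Z (Suc m) = (restrict_cars Z m)(spot (Suc m) := Suc m)" if "m < n" for m
  proof
    fix k
    have "Z k = Suc m \<longleftrightarrow> k = spot (Suc m)" using that spot[of "Suc m" k] by simp
    then show "restrict_cars Z (Suc m) k = ((restrict_cars Z m)(spot (Suc m) := Suc m)) k"
      by (auto simp: restrict_cars_def)
  qed
  have Z: "restrict_cars Z n = Z"
    using bound by (simp add: restrict_cars_def fun_eq_iff)
  show ?thesis
  proof
    assume Zn: "park G n p n = Some Z"
    show "\<forall>m<n. parks_at G n (restrict_cars Z m) (Suc m) (p ! m) (spot (Suc m))"
    proof (intro allI impI)
      fix m assume "m < n"
      then show "parks_at G n (restrict_cars Z m) (Suc m) (p ! m) (spot (Suc m))"
        using park_prefix[OF Zn, of m] park_prefix[OF Zn, of "Suc m"] park_Suc_eq_upd_iff upd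
        by simp
    qed
  next
    assume parks: "\<forall>m<n. parks_at G n (restrict_cars Z m) (Suc m) (p ! m) (spot (Suc m))"
    have "park G n p m = Some (restrict_cars Z m)" if "m \<le> n" for m
      using that
    proof (induction m)
      case 0
      then show ?case by (simp add: restrict_cars_def fun_eq_iff)
    next
      case (Suc m)
      then have "m < n" "park G n p m = Some (restrict_cars Z m)" by simp_all
      then show ?case
        using parks park_Suc_eq_upd_iff[of G n p m "restrict_cars Z m" "spot (Suc m)"] upd
        by (simp del: park.simps fun_upd_apply)
    qed
    then show "park G n p n = Some Z" using Z by simp
  qed
qed

definition occupancy :: "nat list \<Rightarrow> nat \<Rightarrow> nat" where
  "occupancy \<pi> k = (if 1 \<le> k \<and> k \<le> length \<pi> then \<pi> ! (k - 1) else 0)"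

lemma outcome_eq_iff_park:
  assumes "length \<pi> = n"
  shows "park G n p n \<noteq> None \<and> outcome G n p = \<pi> \<longleftrightarrow> park G n p n = Some (occupancy \<pi>)"
proof
  assume H: "park G n p n \<noteq> None \<and> outcome G n p = \<pi>"
  then obtain Z where Z: "park G n p n = Some Z" by blast
  have "Z k = occupancy \<pi> k" for k
  proof (cases "k \<in> {1..n}")
    case True
    then have "outcome G n p ! (k - 1) = Z k"
      using Z by (auto simp: outcome_def simp del: upt_Suc)
    then show ?thesis using H True assms by (auto simp: occupancy_def)
  next
    case False
    then show ?thesis using park_Some_range[OF Z, of k] assms by (auto simp: occupancy_def)
  qed
  then show "park G n p n = Some (occupancy \<pi>)" using Z by auto
next
  assume Z: "park G n p n = Some (occupancy \<pi>)"
  have "map (occupancy \<pi>) [1..<n+1] = \<pi>"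
    using assms by (intro nth_equalityI) (auto simp: occupancy_def simp del: upt_Suc)
  then show "park G n p n \<noteq> None \<and> outcome G n p = \<pi>"
    using Z by (simp add: outcome_def)
qed

lemma card_lists_nth_in:
  "card {xs :: 'a list. length xs = N \<and> (\<forall>m<N. xs ! m \<in> F m)} = (\<Prod>m<N. card (F m))"
proof (induction N)
  case 0
  have "{xs :: 'a list. length xs = 0 \<and> (\<forall>m<0. xs ! m \<in> F m)} = {[]}" by auto
  then show ?case by simp
next
  case (Suc N)
  let ?S = "\<lambda>N. {xs :: 'a list. length xs = N \<and> (\<forall>m<N. xs ! m \<in> F m)}"
  have eq: "?S (Suc N) = (\<lambda>(xs, x). xs @ [x]) ` (?S N \<times> F N)"
  proof (intro set_eqI iffI)
    fix xs assume xs: "xs \<in> ?S (Suc N)"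
    then have "xs \<noteq> []" by auto
    then obtain ys y where xs_eq: "xs = ys @ [y]" by (metis rev_exhaust)
    have "ys \<in> ?S N" using xs xs_eq by (auto simp: nth_append) (metis less_SucI)
    moreover have "y \<in> F N" using xs xs_eq by auto
    ultimately show "xs \<in> (\<lambda>(xs, x). xs @ [x]) ` (?S N \<times> F N)" using xs_eq by auto
  next
    fix xs assume "xs \<in> (\<lambda>(xs, x). xs @ [x]) ` (?S N \<times> F N)"
    then show "xs \<in> ?S (Suc N)" by (auto simp: nth_append less_Suc_eq)
  qed
  have inj: "inj_on (\<lambda>(xs, x). xs @ [x]) (?S N \<times> F N)"
    by (auto simp: inj_on_def)
  show ?case unfolding eq card_image[OF inj] card_cartesian_product Suc.IH by simp
qed

lemma card_friendship_pf_outcome: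
  assumes len: "length \<pi> = n" and perm: "set \<pi> = {1..n}"
    and spot: "\<And>k. k < n \<Longrightarrow> spot (\<pi> ! k) = Suc k"
  shows "card {p. is_friendship_pf G n p \<and> outcome G n p = \<pi>} =
    (\<Prod>m<n. card {q. 1 \<le> q \<and> parks_at G n (restrict_cars (occupancy \<pi>) m) (Suc m) q (spot (Suc m))})"
proof -
  have occ_spot: "occupancy \<pi> k = c \<longleftrightarrow> k = spot c" if "c \<in> {1..n}" for c k
  proof -
    have "c \<in> set \<pi>" using that perm by simp
    then obtain k' where "k' < n" "\<pi> ! k' = c" using len by (auto simp: in_set_conv_nth)
    then have "spot c = Suc k'" using spot by blast
    moreover have "occupancy \<pi> k = c \<Longrightarrow> spot c = k"
      using that spot[of "k - 1"] len by (auto simp: occupancy_def split: if_splits)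
    ultimately show ?thesis
      using \<open>\<pi> ! k' = c\<close> \<open>k' < n\<close> len by (auto simp: occupancy_def)
  qed
  have bound: "occupancy \<pi> k \<le> n" for k
    using nth_mem[of "k - 1" \<pi>] perm len by (auto simp: occupancy_def)
  have le_n: "q \<le> n" if "parks_at G n occ c q s" for occ c q s
    using that unfolding parks_at_def available_def by simp
  have "is_friendship_pf G n p \<and> outcome G n p = \<pi> \<longleftrightarrow>
    length p = n \<and> (\<forall>m<n. p ! m \<in>
       {q. 1 \<le> q \<and> parks_at G n (restrict_cars (occupancy \<pi>) m) (Suc m) q (spot (Suc m))})"
    for p
  proof -
    have "is_friendship_pf G n p \<and> outcome G n p = \<pi> \<longleftrightarrow>
      length p = n \<and> set p \<subseteq> {1..n} \<and> park G n p n = Some (occupancy \<pi>)"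
      unfolding is_friendship_pf_def using outcome_eq_iff_park[OF len] by blast
    also have "\<dots> \<longleftrightarrow> length p = n \<and> (\<forall>m<n. 1 \<le> p ! m \<and>
        parks_at G n (restrict_cars (occupancy \<pi>) m) (Suc m) (p ! m) (spot (Suc m)))"
      using park_eq_Some_iff[of n "occupancy \<pi>" spot G p, OF occ_spot bound] le_n
      unfolding subset_eq all_set_conv_all_nth by (auto; meson le_n)
    finally show ?thesis by simp
  qed
  then have "{p. is_friendship_pf G n p \<and> outcome G n p = \<pi>} =
    {p. length p = n \<and> (\<forall>m<n. p ! m \<in>
       {q. 1 \<le> q \<and> parks_at G n (restrict_cars (occupancy \<pi>) m) (Suc m) q (spot (Suc m))})}"
    by blast
  then show ?thesis by (simp only: card_lists_nth_in)
qed

lemma occupied_not_available: "occ k \<noteq> 0 \<Longrightarrow> \<not> available G n occ c k"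
  by (simp add: available_def)

lemma blocking_seq_eqI:
  assumes "distinct \<pi>" "q < length \<pi>" "\<pi> ! q = j" "m \<le> q"
    and blockers: "\<And>k. m \<le> k \<Longrightarrow> k \<le> q \<Longrightarrow> is_blocker G \<pi> j k"
    and maximal: "0 < m \<Longrightarrow> \<not> is_blocker G \<pi> j (m - 1)"
  shows "blocking_seq j \<pi> G = drop m (take (Suc q) \<pi>)"
proof -
  have "{k. k < length \<pi> \<and> \<pi> ! k = j} = {q}"
    using assms(1-3) nth_eq_iff_index_eq by blast
  moreover have "(LEAST m. \<forall>k. m \<le> k \<and> k \<le> q \<longrightarrow> is_blocker G \<pi> j k) = m"
  proof (rule Least_equality)
    fix y assume y: "\<forall>k. y \<le> k \<and> k \<le> q \<longrightarrow> is_blocker G \<pi> j k"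
    show "m \<le> y"
    proof (rule ccontr)
      assume "\<not> m \<le> y"
      then have "y \<le> m - 1" "m - 1 \<le> q" "0 < m" using assms(4) by auto
      then show False using y maximal by blast
    qed
  qed (use blockers in blast)
  ultimately show ?thesis by (simp add: blocking_seq_def)
qed

lemma prod_split_at:
  assumes "1 \<le> i" "i \<le> n + 1"
  shows "(\<Prod>c\<in>{1..n}. if i \<le> c then c + 1 - i else f c) = (\<Prod>c\<in>{1..i - 1}. f c) * fact (n + 1 - i)"
proof -
  have "i - 1 \<le> n" using assms(2) by simp
  then show ?thesis
  proof (induction n rule: dec_induct)
    case base
    have "(\<Prod>c\<in>{1..i - 1}. if i \<le> c then c + 1 - i else f c) = (\<Prod>c\<in>{1..i - 1}. f c)"
      by (rule prod.cong) auto
    then show ?case using assms(1) by simp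
  next
    case (step n)
    have "(\<Prod>c\<in>{1..Suc n}. if i \<le> c then c + 1 - i else f c)
        = (\<Prod>c\<in>{1..n}. if i \<le> c then c + 1 - i else f c) * (Suc n + 1 - i)"
      using step.hyps(1) by (simp add: le_diff_conv)
    also have "\<dots> = (\<Prod>c\<in>{1..i - 1}. f c) * fact (Suc n + 1 - i)"
      using step by (simp add: Suc_diff_le fact_Suc algebra_simps)
    finally show ?case .
  qed
qed

lemma prod_skipping_3_le2:
  "N \<le> 2 \<Longrightarrow> (\<Prod>c\<in>{1..N}. if c \<le> 2 then c else c + 1) = fact N"
  by (simp add: fact_prod)

lemma prod_skipping_3:
  "2 \<le> N \<Longrightarrow> 3 * (\<Prod>c\<in>{1..N}. if c \<le> 2 then c else c + 1) = fact (N + 1)"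
proof (induction N rule: dec_induct)
  case base
  then show ?case by (simp add: fact_numeral numeral_2_eq_2)
next
  case (step N)
  then show ?case by (simp add: algebra_simps)
qed

definition inc_spot :: "nat \<Rightarrow> nat \<Rightarrow> nat \<Rightarrow> nat" where
  "inc_spot n i c = (if i \<le> c then c + 1 - i else n + 1 - i + c)"

definition min_pref :: "nat \<Rightarrow> nat \<Rightarrow> nat \<Rightarrow> nat" where
  "min_pref n i c = (if i \<le> c then 1 else if c \<le> 2 then n + 2 - i else n + 1 - i)"

abbreviation inc_parked :: "nat \<Rightarrow> nat \<Rightarrow> nat \<Rightarrow> nat \<Rightarrow> nat" where
  "inc_parked n i m \<equiv> restrict_cars (occupancy (Inc n i)) m"

text \<open>A 0-based index into Inc n i, whereas inc_spot gives 1-based spots.\<close>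
definition blocking_start :: "nat \<Rightarrow> nat \<Rightarrow> nat \<Rightarrow> nat" where
  "blocking_start n i j = (if i \<le> j then 0 else if 3 \<le> j then n - i else n - i + 1)"

context
  fixes n i :: nat
  assumes n3: "n \<ge> 3" and i1: "1 \<le> i" and iN: "i \<le> n"
begin

lemma length_Inc: "length (Inc n i) = n"
  using i1 iN by (simp add: Inc_def)

lemma set_Inc: "set (Inc n i) = {1..n}"
  using i1 iN by (auto simp: Inc_def)

lemma nth_Inc: "k < n \<Longrightarrow> Inc n i ! k = (if k \<le> n - i then k + i else k + i - n)"
  using i1 iN by (auto simp: Inc_def nth_append)

lemma nth_Inc_low: "k \<le> n - i \<Longrightarrow> Inc n i ! k = k + i"
  using nth_Inc[of k] i1 iN by (simp add: le_diff_conv2)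

lemma nth_Inc_high: "k < n \<Longrightarrow> n - i < k \<Longrightarrow> Inc n i ! k = k + i - n"
  using nth_Inc[of k] by simp

lemma inc_spot_nth_Inc: "k < n \<Longrightarrow> inc_spot n i (Inc n i ! k) = Suc k"
  using i1 iN by (auto simp: nth_Inc inc_spot_def)

lemma inc_parked_low:
  "1 \<le> k \<Longrightarrow> k \<le> n - i + 1 \<Longrightarrow>
    inc_parked n i m k = (if k + i - 1 \<le> m then k + i - 1 else 0)"
  using i1 iN by (auto simp: restrict_cars_def occupancy_def length_Inc nth_Inc)

lemma inc_parked_high:
  "n - i + 1 < k \<Longrightarrow> k \<le> n \<Longrightarrow>
    inc_parked n i m k = (if k + i - 1 - n \<le> m then k + i - 1 - n else 0)"
  using i1 iN by (auto simp: restrict_cars_def occupancy_def length_Inc nth_Inc)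

lemma inc_parked_outside: "k = 0 \<or> n < k \<Longrightarrow> inc_parked n i m k = 0"
  by (auto simp: restrict_cars_def occupancy_def length_Inc)

lemma cyc_available_inc_spot_late:
  assumes m: "m < n" and late: "i \<le> Suc m"
  shows "available (cyc n) n (inc_parked n i m) (Suc m) (inc_spot n i (Suc m))"
proof -
  have s: "inc_spot n i (Suc m) = Suc m + 1 - i" using late by (simp add: inc_spot_def)
  have here: "inc_parked n i m (Suc m + 1 - i) = 0" using late m iN by (subst inc_parked_low) auto
  have left: "inc_parked n i m (Suc m + 1 - i - 1) = 0 \<or>
    cyc n (Suc m) (inc_parked n i m (Suc m + 1 - i - 1))"
  proof (cases "Suc m = i")
    case True then show ?thesis by (simp add: inc_parked_outside)
  next
    case False
    then have "inc_parked n i m (Suc m + 1 - i - 1) = m"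
      using late m iN i1 by (subst inc_parked_low) auto
    then show ?thesis using False late m i1 by (simp add: cyc_def)
  qed
  have right: "inc_parked n i m (Suc m + 1 - i + 1) = 0 \<or>
    cyc n (Suc m) (inc_parked n i m (Suc m + 1 - i + 1))"
  proof (cases "Suc m < n")
    case True then show ?thesis using late iN by (subst inc_parked_low) auto
  next
    case False
    then have mn: "Suc m = n" using m by simp
    show ?thesis
    proof (cases "i = 1")
      case True then show ?thesis using mn inc_parked_outside[of "Suc n" m] by simp
    next
      case False
      then have "inc_parked n i m (Suc m + 1 - i + 1) = 1"
        using mn i1 iN n3 by (subst inc_parked_high) auto
      then show ?thesis using mn n3 by (simp add: cyc_def)
    qed
  qed
  show ?thesis unfolding available_def s using here left right late m iN i1 by auto
qed

lemma cyc_available_inc_spot_early: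
  assumes m: "m < n" and early: "Suc m < i"
  shows "available (cyc n) n (inc_parked n i m) (Suc m) (inc_spot n i (Suc m))"
proof -
  have s: "inc_spot n i (Suc m) = n + 1 - i + Suc m" using early by (simp add: inc_spot_def)
  have here: "inc_parked n i m (n + 1 - i + Suc m) = 0" using early m iN by (subst inc_parked_high) auto
  have left: "inc_parked n i m (n + 1 - i + Suc m - 1) = 0 \<or>
    cyc n (Suc m) (inc_parked n i m (n + 1 - i + Suc m - 1))"
  proof (cases "m = 0")
    case True then show ?thesis using iN n3 by (subst inc_parked_low) auto
  next
    case False
    then have "inc_parked n i m (n + 1 - i + Suc m - 1) = m"
      using early m iN i1 by (subst inc_parked_high) auto
    then show ?thesis using False early m i1 by (simp add: cyc_def)
  qed
  have right: "inc_parked n i m (n + 1 - i + Suc m + 1) = 0"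
  proof (cases "Suc (Suc m) < i")
    case True then show ?thesis using iN by (subst inc_parked_high) auto
  next
    case False then show ?thesis using early iN by (subst inc_parked_outside) auto
  qed
  show ?thesis unfolding available_def s using here left right early m iN i1 by auto
qed

lemma cyc_available_inc_spot:
  "m < n \<Longrightarrow> available (cyc n) n (inc_parked n i m) (Suc m) (inc_spot n i (Suc m))"
  using cyc_available_inc_spot_late cyc_available_inc_spot_early by (cases "i \<le> Suc m") simp_all

lemma cyc_not_available_before_inc_spot:
  assumes m: "m < n" and k: "min_pref n i (Suc m) \<le> k" "k < inc_spot n i (Suc m)"
  shows "\<not> available (cyc n) n (inc_parked n i m) (Suc m) k"
proof (cases "i \<le> Suc m")
  case True
  then have "1 \<le> k" "k \<le> Suc m - i" using k by (auto simp: min_pref_def inc_spot_def)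
  then have "inc_parked n i m k \<noteq> 0" using True m iN i1 by (subst inc_parked_low) auto
  then show ?thesis by (rule occupied_not_available)
next
  case False
  then have k_lt: "k < n + 1 - i + Suc m" using k by (simp add: inc_spot_def)
  show ?thesis
  proof (cases "n + 1 - i < k")
    case True
    then have "inc_parked n i m k \<noteq> 0" using False k_lt iN i1 by (subst inc_parked_high) auto
    then show ?thesis by (rule occupied_not_available)
  next
    case False2: False
    then have c3: "Suc m \<ge> 3" and k_eq: "k = n + 1 - i"
      using k \<open>\<not> i \<le> Suc m\<close> iN by (auto simp: min_pref_def split: if_splits)
    have "inc_parked n i m (k + 1) = 1" using k_eq \<open>\<not> i \<le> Suc m\<close> iN c3 by (subst inc_parked_high) auto
    moreover have "\<not> cyc n (Suc m) 1" using c3 \<open>\<not> i \<le> Suc m\<close> iN by (auto simp: cyc_def)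
    ultimately show ?thesis by (simp add: available_def)
  qed
qed

lemma cyc_available_before_min_pref:
  assumes m: "m < n" and a: "1 < min_pref n i (Suc m)"
  shows "available (cyc n) n (inc_parked n i m) (Suc m) (min_pref n i (Suc m) - 1)"
proof -
  have lt: "Suc m < i" using a by (auto simp: min_pref_def split: if_splits)
  consider "m = 0" | "m = 1" | "m \<ge> 2" by linarith
  then show ?thesis
  proof cases
    case 1
    have empty: "inc_parked n i m = (\<lambda>_. 0)"
      using 1 by (auto simp: restrict_cars_def occupancy_def length_Inc nth_Inc fun_eq_iff)
    show ?thesis using 1 lt iN unfolding empty by (auto simp: min_pref_def available_def)
  next
    case 2
    have A: "min_pref n i (Suc m) - 1 = n + 1 - i" using 2 lt by (simp add: min_pref_def)
    have here: "inc_parked n i 1 (n + 1 - i) = 0" using iN n3 by (subst inc_parked_low) auto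
    have left: "inc_parked n i 1 (n + 1 - i - 1) = 0"
    proof (cases "n + 1 - i - 1 = 0")
      case True then show ?thesis by (simp add: inc_parked_outside)
    next
      case False then show ?thesis using iN n3 by (subst inc_parked_low) auto
    qed
    have right: "inc_parked n i 1 (n + 1 - i + 1) = 1" using iN lt 2 by (subst inc_parked_high) auto
    have r: "1 \<le> n + 1 - i \<and> n + 1 - i \<le> n" using lt iN by linarith
    show ?thesis unfolding A using here left right r 2 n3 by (simp add: available_def cyc_def)
  next
    case 3
    have A: "min_pref n i (Suc m) - 1 = n - i" using 3 lt by (simp add: min_pref_def)
    have ni: "1 \<le> n - i" using a A by simp
    have here: "inc_parked n i m (n - i) = 0" using iN n3 lt ni by (subst inc_parked_low) auto
    have left: "inc_parked n i m (n - i - 1) = 0"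
    proof (cases "n - i - 1 = 0")
      case True then show ?thesis by (simp add: inc_parked_outside)
    next
      case False then show ?thesis using iN n3 lt by (subst inc_parked_low) auto
    qed
    have right: "inc_parked n i m (n - i + 1) = 0" using iN lt by (subst inc_parked_low) auto
    show ?thesis unfolding A using here left right ni iN by (simp add: available_def)
  qed
qed

lemma cyc_prefs_Inc:
  assumes m: "m < n"
  shows "{q. 1 \<le> q \<and> parks_at (cyc n) n (inc_parked n i m) (Suc m) q (inc_spot n i (Suc m))}
    = {min_pref n i (Suc m) .. inc_spot n i (Suc m)}"
proof (intro set_eqI iffI)
  fix q
  assume "q \<in> {q. 1 \<le> q \<and> parks_at (cyc n) n (inc_parked n i m) (Suc m) q (inc_spot n i (Suc m))}"
  then have q: "1 \<le> q" "parks_at (cyc n) n (inc_parked n i m) (Suc m) q (inc_spot n i (Suc m))"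
    by simp_all
  have "min_pref n i (Suc m) \<le> inc_spot n i (Suc m)"
    using iN by (auto simp: min_pref_def inc_spot_def)
  moreover have "min_pref n i (Suc m) \<le> q"
  proof (rule ccontr)
    assume "\<not> ?thesis"
    then have "1 < min_pref n i (Suc m)" "q \<le> min_pref n i (Suc m) - 1" using q(1) by auto
    with q(2) show False
      using cyc_available_before_min_pref[OF m] \<open>min_pref n i (Suc m) \<le> inc_spot n i (Suc m)\<close>
      unfolding parks_at_def by fastforce
  qed
  ultimately show "q \<in> {min_pref n i (Suc m) .. inc_spot n i (Suc m)}"
    using q(2) by (simp add: parks_at_def)
next
  fix q
  assume q: "q \<in> {min_pref n i (Suc m) .. inc_spot n i (Suc m)}"
  have "1 \<le> min_pref n i (Suc m)"
    using iN by (auto simp: min_pref_def)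
  with q show "q \<in> {q. 1 \<le> q \<and> parks_at (cyc n) n (inc_parked n i m) (Suc m) q (inc_spot n i (Suc m))}"
    using cyc_available_inc_spot[OF m] cyc_not_available_before_inc_spot[OF m]
    by (auto simp: parks_at_def)
qed

lemma card_cyc_pf_Inc:
  "card {p. is_friendship_pf (cyc n) n p \<and> outcome (cyc n) n p = Inc n i}
    = (\<Prod>c\<in>{1..n}. if i \<le> c then c + 1 - i else if c \<le> 2 then c else c + 1)"
proof -
  have "card {p. is_friendship_pf (cyc n) n p \<and> outcome (cyc n) n p = Inc n i}
      = (\<Prod>m<n. card {min_pref n i (Suc m) .. inc_spot n i (Suc m)})"
    using card_friendship_pf_outcome[OF length_Inc set_Inc inc_spot_nth_Inc] cyc_prefs_Inc
    by simp
  also have "\<dots> = (\<Prod>m<n. if i \<le> Suc m then Suc m + 1 - i else if Suc m \<le> 2 then Suc m else Suc m + 1)"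
    using iN by (intro prod.cong) (auto simp: min_pref_def inc_spot_def)
  finally show ?thesis by (simp add: prod.atLeast1_atMost_eq)
qed

lemma Inc_blockers:
  assumes j: "j \<in> {1..n}" and k: "blocking_start n i j \<le> k" "k \<le> inc_spot n i j - 1"
  shows "is_blocker (cyc n) (Inc n i) j k"
proof (cases "i \<le> j")
  case True
  then have kj: "k \<le> j - i" using k by (simp add: inc_spot_def)
  then have kn: "k < n" "k \<le> n - i" using j iN i1 by auto
  have "Inc n i ! k \<le> j" using nth_Inc_low[OF kn(2)] kj True by simp
  then show ?thesis using kn length_Inc by (simp add: is_blocker_def)
next
  case False
  then have kq: "k \<le> n - i + j" using k iN by (simp add: inc_spot_def)
  show ?thesis
  proof (cases "n - i < k")
    case True
    have kn: "k < n" using kq False iN by linarith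
    have "Inc n i ! k \<le> j" using nth_Inc_high[OF kn True] kq iN by simp
    then show ?thesis using kn length_Inc by (simp add: is_blocker_def)
  next
    case False2: False
    then have j3: "3 \<le> j" and kk: "k = n - i"
      using k False by (auto simp: blocking_start_def split: if_splits)
    have "Inc n i ! k = n" using nth_Inc_low[of k] kk iN by simp
    moreover have "Inc n i ! (k + 1) = 1" using nth_Inc_high[of "k + 1"] kk False j iN by simp
    moreover have "\<not> cyc n j 1" using j3 False iN by (auto simp: cyc_def)
    moreover have "k + 1 < n" using kk False j3 iN by linarith
    ultimately show ?thesis
      using kk False j3 iN length_Inc by (simp add: is_blocker_def)
  qed
qed

lemma Inc_not_blocker_before_start:
  assumes j: "j \<in> {1..n}" and start: "0 < blocking_start n i j"
  shows "\<not> is_blocker (cyc n) (Inc n i) j (blocking_start n i j - 1)"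
proof -
  have ji: "j < i" using start by (auto simp: blocking_start_def split: if_splits)
  show ?thesis
  proof (cases "3 \<le> j")
    case True
    define k where "k = n - i - 1"
    have ni: "1 \<le> n - i" using start True ji by (auto simp: blocking_start_def)
    have "Inc n i ! k = n - 1" "Inc n i ! (k + 1) = n"
      using nth_Inc_low[of k] nth_Inc_low[of "k + 1"] ni iN unfolding k_def by simp_all
    moreover have "0 < k \<Longrightarrow> Inc n i ! (k - 1) = n - 2"
      using nth_Inc_low[of "k - 1"] iN unfolding k_def by simp
    moreover have "j \<le> n - 2" using ji ni by linarith
    ultimately have "\<not> is_blocker (cyc n) (Inc n i) j k"
      using True unfolding is_blocker_def by (cases "k = 0") auto
    then show ?thesis using True ji by (simp add: blocking_start_def k_def)
  next
    case False
    define k where "k = n - i"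
    have "Inc n i ! k = n" using nth_Inc_low[of k] iN unfolding k_def by simp
    moreover have "Inc n i ! (k + 1) = 1"
      using nth_Inc_high[of "k + 1"] ji j iN unfolding k_def by simp
    moreover have "0 < k \<Longrightarrow> Inc n i ! (k - 1) = n - 1"
      using nth_Inc_low[of "k - 1"] iN unfolding k_def by simp
    moreover have "j = 2 \<Longrightarrow> cyc n j 1" using n3 by (simp add: cyc_def)
    ultimately have "\<not> is_blocker (cyc n) (Inc n i) j k"
      using False n3 j unfolding is_blocker_def by (cases "k = 0"; cases "j = 2") auto
    then show ?thesis using False ji by (simp add: blocking_start_def k_def)
  qed
qed

lemma blocking_seq_Inc:
  assumes j: "j \<in> {1..n}"
  shows "blocking_seq j (Inc n i) (cyc n) =
    (if i \<le> j then [i..<j+1] else if 3 \<le> j then n # [1..<j+1] else [1..<j+1])"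
proof -
  let ?q = "inc_spot n i j - 1"
  have q: "?q < n" "Inc n i ! ?q = j"
    using j iN i1 by (auto simp: inc_spot_def nth_Inc)
  have start: "blocking_start n i j \<le> ?q"
    using j iN by (auto simp: blocking_start_def inc_spot_def)
  have "distinct (Inc n i)" using iN by (auto simp: Inc_def)
  then have "blocking_seq j (Inc n i) (cyc n) = drop (blocking_start n i j) (take (Suc ?q) (Inc n i))"
    using q start Inc_blockers[OF j] Inc_not_blocker_before_start[OF j] length_Inc
    by (intro blocking_seq_eqI) auto
  also have "\<dots> = (if i \<le> j then [i..<j+1] else if 3 \<le> j then n # [1..<j+1] else [1..<j+1])"
  proof (cases "i \<le> j")
    case True
    then have "Suc ?q = j + 1 - i" "j + 1 - i \<le> length [i..<n+1]" using j iN by (auto simp: inc_spot_def)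
    then show ?thesis using True j iN
      by (simp add: blocking_start_def Inc_def take_append take_upt del: upt_Suc)
  next
    case False
    have "take (Suc ?q) (Inc n i) = [i..<n+1] @ [1..<j+1]"
      using False j iN by (simp add: inc_spot_def Inc_def take_append take_upt del: upt_Suc)
    then show ?thesis using False j iN i1
      by (auto simp: blocking_start_def drop_append upt_rec[of i])
  qed
  finally show ?thesis .
qed

end

theorem proposition2p9:
  fixes n i :: nat
  assumes "n \<ge> 3" and "i \<in> {1..n}"
  shows
   "(4 \<le> i \<longrightarrow>
      (\<forall>j\<in>{1..n}. blocking_seq j (Inc n i) (cyc n) =
          (if i \<le> j then [i..<j+1]
           else if 3 \<le> j then n # [1..<j+1]
           else if j = 2 then [1, 2] else [1])) \<and>
      (of_nat (card {p. is_friendship_pf (cyc n) n p \<and> outcome (cyc n) n p = Inc n i}) :: real)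
        = of_nat (fact (n - i + 1) * fact i) / 3)
    \<and>
    (i \<le> 3 \<longrightarrow>
      (\<forall>j\<in>{1..n}. blocking_seq j (Inc n i) (cyc n) =
          (if i \<le> j then [i..<j+1] else [1..<j+1])) \<and>
      card {p. is_friendship_pf (cyc n) n p \<and> outcome (cyc n) n p = Inc n i}
        = fact (n + 1 - i) * fact (i - 1))"
proof -
  have n3: "n \<ge> 3" and i1: "1 \<le> i" and iN: "i \<le> n" using assms by auto
  let ?lower = "\<Prod>c\<in>{1..i - 1}. if c \<le> 2 then c else c + 1"
  have count: "card {p. is_friendship_pf (cyc n) n p \<and> outcome (cyc n) n p = Inc n i}
      = ?lower * fact (n + 1 - i)"
    using card_cyc_pf_Inc[OF n3 i1 iN] prod_split_at[of i n] i1 iN by simp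
  have count_large: "(of_nat (card {p. is_friendship_pf (cyc n) n p \<and> outcome (cyc n) n p = Inc n i}) :: real)
      = of_nat (fact (n - i + 1) * fact i) / 3" if "4 \<le> i"
  proof -
    have "fact i = 3 * ?lower" using prod_skipping_3[of "i - 1"] that by simp
    then show ?thesis using count iN by (simp add: Suc_diff_le)
  qed
  have "?lower = fact (i - 1)" if "i \<le> 3"
    using that by (intro prod_skipping_3_le2) simp
  then have count_small: "card {p. is_friendship_pf (cyc n) n p \<and> outcome (cyc n) n p = Inc n i}
      = fact (n + 1 - i) * fact (i - 1)" if "i \<le> 3"
    using count that by simp
  have upto_le2: "[1..<j+1] = (if j = 2 then [1, 2] else [1])" if "1 \<le> j" "j \<le> 2" for j :: nat
    using that by (cases "j = 2") (auto simp: numeral_2_eq_2 upt_rec)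
  show ?thesis
    using blocking_seq_Inc[OF n3 i1 iN] upto_le2 count_large count_small by auto
qed

end
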